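(* Let $n\ge3$ and let $(\mathcal P,\mathcal M,p)$ be an operational theory containing binary measurements $M_1,\dots,M_n$ (outcomes $X_i\in\{0,1\}$) and two families of four-outcome measurements $M_{ij}$ and $M'_{ij}$, for $i\in\{1,\dots,n\}$ and $j=i+1\bmod n$, with outcomes $(X_i,X_j)$, each being a joint measurement of $M_i$ and $M_j$: for every $i$, $M_i^{(i-1)}\simeq M_i^{(i+1)}\simeq M_i$ and $M_i'^{(i-1)}\simeq M_i'^{(i+1)}\simeq M_i$ (indices modulo $n$). Let $P_*,P_*^\perp,P_i,P_i^\perp\in\mathcal P$ ($i=1,\dots,n$), let $P_x^{(\mathrm{ave})}$ implement $P_x$ or $P_x^\perp$ with probability $\tfrac12$ each, and suppose $P_*^{(\mathrm{ave})}\simeq P_1^{(\mathrm{ave})}\simeq\cdots\simeq P_n^{(\mathrm{ave})}$. Define $p(\mathrm{anti}|M_*,P)=\tfrac1n\sum_{i=1}^np(X_i\neq X_{i+1}|M_{i,i+1},P)$ (indices mod $n$), $p(\mathrm{chained}|M_*,P)=\tfrac1n\sum_{i=1}^{n-1}p(X_i=X_{i+1}|M_{i,i+1},P)+\tfrac1n p(X_n\neq X_1|M_{n1},P)$, the analogous quantities for $M'_*$ using $M'_{ij}$, and $\eta_{\mathrm{ave}}=\tfrac1{2n}\sum_{i=1}^n(\eta(M_i,P_i)+\eta(M_i,P_i^\perp))$. If the theory admits an ontological model that is both measurement and preparation noncontextual, then for odd $n\ge3$ $$p(\mathrm{anti}|M_*,P_* )+p(\mathrm{anti}|M'_*,P_*^\perp)\le2\Big(1-\tfrac1n\eta_{\mathrm{ave}}\Big),$$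 and for even $n\ge4$ $$p(\mathrm{chained}|M_*,P_* )+p(\mathrm{chained}|M'_*,P_*^\perp)\le2\Big(1-\tfrac1n\eta_{\mathrm{ave}}\Big).$$ Moreover, using only the equivalences for the $M_{ij}$ and the preparation equivalences, for odd $n$: $p(\mathrm{anti}|M_*,P_* )+p(\mathrm{anti}|M_*,P_*^\perp)\le2(1-\tfrac1n\eta_{\mathrm{ave}})$ and $p(\mathrm{anti}|M_*,P_* )\le\tfrac{n-1}{n}+\tfrac{2(1-\eta_{\mathrm{ave}})}{n}$; and for even $n$: $p(\mathrm{chained}|M_*,P_* )+p(\mathrm{chained}|M_*,P_*^\perp)\le2(1-\tfrac1n\eta_{\mathrm{ave}})$ and $p(\mathrm{chained}|M_*,P_* )\le\tfrac{n-1}{n}+\tfrac{2(1-\eta_{\mathrm{ave}})}{n}$.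
   Context: Operational theory: preparations, measurements with finite outcome sets, probabilities $p(X|M,P)$. Ontological model: ontic states $\Lambda$, distributions $\mu(\cdot|P)$, response functions $\xi(X|M,\lambda)$ with $p(X|M,P)=\sum_\lambda\xi(X|M,\lambda)\mu(\lambda|P)$; mixtures of preparations are represented by mixtures of distributions and coarse-grainings of outcomes by sums of response functions. $M_i^{(j)}$ is the binary measurement obtained from the joint measurement of $M_i$ and $M_j$ by discarding $X_j$ (for $j=i-1$ this means the measurement $M_{i-1,i}$), similarly for primed measurements. $\simeq$ denotes operational equivalence: measurements giving the same statistics on all preparations, preparations giving the same statistics for all measurements. Measurement noncontextuality: operationally equivalent measurement events have equal response functions for all $\lambda$; preparation noncontextuality: equivalent preparations have equal $\mu(\cdot|P)$. The predictability is $\eta(M,P)=2\max_{X\in\{0,1\}}p(X|M,P)-1$. Outcome determinism is not assumed. *)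

theory Defs
  imports "HOL-Probability.Probability"
begin

(* Operational theory: measurements 'm with finite outcome sets outs M (outcomes labelled
   by naturals), preparations 'p, probabilities prob M x P = p(x|M,P).
   mix w P Q : preparation implementing P with prob. w and Q with prob. 1-w.
   coarse f M : coarse-graining of M by relabelling outcome x to f x. *)
definition op_theory ::
  "('m \<Rightarrow> nat set) \<Rightarrow> ('m \<Rightarrow> nat \<Rightarrow> 'p \<Rightarrow> real) \<Rightarrow>
   (real \<Rightarrow> 'p \<Rightarrow> 'p \<Rightarrow> 'p) \<Rightarrow> ((nat \<Rightarrow> nat) \<Rightarrow> 'm \<Rightarrow> 'm) \<Rightarrow> bool" where
  "op_theory outs prob mix coarse \<longleftrightarrow>
     (\<forall>M. finite (outs M) \<and> outs M \<noteq> {}) \<and>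
     (\<forall>M x P. 0 \<le> prob M x P) \<and>
     (\<forall>M x P. x \<notin> outs M \<longrightarrow> prob M x P = 0) \<and>
     (\<forall>M P. (\<Sum>x\<in>outs M. prob M x P) = 1) \<and>
     (\<forall>w P Q M x. 0 \<le> w \<and> w \<le> 1 \<longrightarrow>
        prob M x (mix w P Q) = w * prob M x P + (1 - w) * prob M x Q) \<and>
     (\<forall>f M. outs (coarse f M) = f ` outs M) \<and>
     (\<forall>f M x P. prob (coarse f M) x P = (\<Sum>y\<in>{y\<in>outs M. f y = x}. prob M y P))"

(* Ontological model with (discrete) ontic state space 'l: distributions mu P,
   response functions xi M x l = xi(x|M,lambda). *)
definition ont_model ::
  "('m \<Rightarrow> nat set) \<Rightarrow> ('m \<Rightarrow> nat \<Rightarrow> 'p \<Rightarrow> real) \<Rightarrow>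
   (real \<Rightarrow> 'p \<Rightarrow> 'p \<Rightarrow> 'p) \<Rightarrow> ((nat \<Rightarrow> nat) \<Rightarrow> 'm \<Rightarrow> 'm) \<Rightarrow>
   ('p \<Rightarrow> 'l pmf) \<Rightarrow> ('m \<Rightarrow> nat \<Rightarrow> 'l \<Rightarrow> real) \<Rightarrow> bool" where
  "ont_model outs prob mix coarse \<mu> \<xi> \<longleftrightarrow>
     (\<forall>M x l. 0 \<le> \<xi> M x l) \<and>
     (\<forall>M x l. x \<notin> outs M \<longrightarrow> \<xi> M x l = 0) \<and>
     (\<forall>M l. (\<Sum>x\<in>outs M. \<xi> M x l) = 1) \<and>
     (\<forall>M x P. prob M x P = measure_pmf.expectation (\<mu> P) (\<xi> M x)) \<and>
     (\<forall>w P Q l. 0 \<le> w \<and> w \<le> 1 \<longrightarrow>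
        pmf (\<mu> (mix w P Q)) l = w * pmf (\<mu> P) l + (1 - w) * pmf (\<mu> Q) l) \<and>
     (\<forall>f M x l. \<xi> (coarse f M) x l = (\<Sum>y\<in>{y\<in>outs M. f y = x}. \<xi> M y l))"

definition meas_event_equiv :: "('m \<Rightarrow> nat \<Rightarrow> 'p \<Rightarrow> real) \<Rightarrow> 'm \<Rightarrow> nat \<Rightarrow> 'm \<Rightarrow> nat \<Rightarrow> bool" where
  "meas_event_equiv prob M x N y \<longleftrightarrow> (\<forall>P. prob M x P = prob N y P)"

definition meas_equiv :: "('m \<Rightarrow> nat set) \<Rightarrow> ('m \<Rightarrow> nat \<Rightarrow> 'p \<Rightarrow> real) \<Rightarrow> 'm \<Rightarrow> 'm \<Rightarrow> bool" where
  "meas_equiv outs prob M N \<longleftrightarrow> outs M = outs N \<and> (\<forall>x. meas_event_equiv prob M x N x)"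

definition prep_equiv :: "('m \<Rightarrow> nat \<Rightarrow> 'p \<Rightarrow> real) \<Rightarrow> 'p \<Rightarrow> 'p \<Rightarrow> bool" where
  "prep_equiv prob P Q \<longleftrightarrow> (\<forall>M x. prob M x P = prob M x Q)"

definition meas_nc :: "('m \<Rightarrow> nat \<Rightarrow> 'p \<Rightarrow> real) \<Rightarrow> ('m \<Rightarrow> nat \<Rightarrow> 'l \<Rightarrow> real) \<Rightarrow> bool" where
  "meas_nc prob \<xi> \<longleftrightarrow>
     (\<forall>M x N y. meas_event_equiv prob M x N y \<longrightarrow> (\<forall>l. \<xi> M x l = \<xi> N y l))"

definition prep_nc :: "('m \<Rightarrow> nat \<Rightarrow> 'p \<Rightarrow> real) \<Rightarrow> ('p \<Rightarrow> 'l pmf) \<Rightarrow> bool" where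
  "prep_nc prob \<mu> \<longleftrightarrow> (\<forall>P Q. prep_equiv prob P Q \<longrightarrow> \<mu> P = \<mu> Q)"

(* cyclic indices on {1..n} *)
definition nxt :: "nat \<Rightarrow> nat \<Rightarrow> nat" where "nxt n i = i mod n + 1"
definition prv :: "nat \<Rightarrow> nat \<Rightarrow> nat" where "prv n i = (i + n - 2) mod n + 1"

(* outcome (X_i, X_j) of a joint measurement M_ij is encoded as 2*X_i + X_j *)
definition enc :: "nat \<Rightarrow> nat \<Rightarrow> nat" where "enc a b = 2 * a + b"

(* Mj i = M_{i,i+1} is a joint measurement of Mb i and Mb (i+1):
   discarding X_{i+1} gives M_i^{(i+1)} ~ M_i, and for M_{i-1,i} discarding X_{i-1}
   gives M_i^{(i-1)} ~ M_i. *)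
definition joint_meas ::
  "('m \<Rightarrow> nat set) \<Rightarrow> ('m \<Rightarrow> nat \<Rightarrow> 'p \<Rightarrow> real) \<Rightarrow> ((nat \<Rightarrow> nat) \<Rightarrow> 'm \<Rightarrow> 'm) \<Rightarrow>
   (nat \<Rightarrow> 'm) \<Rightarrow> (nat \<Rightarrow> 'm) \<Rightarrow> nat \<Rightarrow> bool" where
  "joint_meas outs prob coarse Mb Mj n \<longleftrightarrow>
     (\<forall>i\<in>{1..n}.
        outs (Mj i) = {enc a b | a b. a \<in> {0,1} \<and> b \<in> {0,1}} \<and>
        meas_equiv outs prob (coarse (\<lambda>x. x div 2) (Mj i)) (Mb i) \<and>
        meas_equiv outs prob (coarse (\<lambda>x. x mod 2) (Mj (prv n i))) (Mb i))"

definition p_neq :: "('m \<Rightarrow> nat \<Rightarrow> 'p \<Rightarrow> real) \<Rightarrow> 'm \<Rightarrow> 'p \<Rightarrow> real" where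
  "p_neq prob M P = prob M (enc 0 1) P + prob M (enc 1 0) P"

definition p_eq :: "('m \<Rightarrow> nat \<Rightarrow> 'p \<Rightarrow> real) \<Rightarrow> 'm \<Rightarrow> 'p \<Rightarrow> real" where
  "p_eq prob M P = prob M (enc 0 0) P + prob M (enc 1 1) P"

definition p_anti :: "('m \<Rightarrow> nat \<Rightarrow> 'p \<Rightarrow> real) \<Rightarrow> (nat \<Rightarrow> 'm) \<Rightarrow> nat \<Rightarrow> 'p \<Rightarrow> real" where
  "p_anti prob Mj n P = (1 / real n) * (\<Sum>i=1..n. p_neq prob (Mj i) P)"

definition p_chained :: "('m \<Rightarrow> nat \<Rightarrow> 'p \<Rightarrow> real) \<Rightarrow> (nat \<Rightarrow> 'm) \<Rightarrow> nat \<Rightarrow> 'p \<Rightarrow> real" where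
  "p_chained prob Mj n P =
     (1 / real n) * (\<Sum>i=1..n-1. p_eq prob (Mj i) P) + (1 / real n) * p_neq prob (Mj n) P"

definition eta :: "('m \<Rightarrow> nat \<Rightarrow> 'p \<Rightarrow> real) \<Rightarrow> 'm \<Rightarrow> 'p \<Rightarrow> real" where
  "eta prob M P = 2 * max (prob M 0 P) (prob M 1 P) - 1"

definition eta_ave ::
  "('m \<Rightarrow> nat \<Rightarrow> 'p \<Rightarrow> real) \<Rightarrow> (nat \<Rightarrow> 'm) \<Rightarrow> (nat \<Rightarrow> 'p) \<Rightarrow> (nat \<Rightarrow> 'p) \<Rightarrow> nat \<Rightarrow> real" where
  "eta_ave prob Mb Px Pxp n =
     (1 / (2 * real n)) * (\<Sum>i=1..n. eta prob (Mb i) (Px i) + eta prob (Mb i) (Pxp i))"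

end

theory Submission
  imports Defs
begin

text \<open>
  Every ontic state \<open>\<lambda>\<close> assigns to each \<open>M\<^sub>i\<close> a bias \<open>c\<^sub>i(\<lambda>) = 2\<xi>(0|M\<^sub>i,\<lambda>) - 1\<close>.
  Measurement noncontextuality turns the response functions of \<open>M\<^sub>i\<^sub>,\<^sub>i\<^sub>+\<^sub>1\<close> into a joint
  distribution of two bits with exactly these marginals, so anticorrelation has probability at
  most \<open>1 - |c\<^sub>i + c\<^sub>i\<^sub>+\<^sub>1|/2\<close> and correlation at most \<open>1 - |c\<^sub>i - c\<^sub>i\<^sub>+\<^sub>1|/2\<close>.
  Around an odd cycle (or along the chain, whose last edge flips the sign) these edge terms
  bound the length of a path from \<open>c\<^sub>j\<close> to \<open>-c\<^sub>j\<close>, which is at least \<open>2|c\<^sub>j|\<close> for every \<open>j\<close>;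
  averaging over \<open>j\<close> and integrating over \<open>\<lambda>\<close> bounds the success probability by the
  expected \<open>|c\<^sub>j|\<close>. Finally \<open>\<eta>(M\<^sub>j,P) = |E c\<^sub>j| \<le> E|c\<^sub>j|\<close>, and preparation noncontextuality
  identifies the sum of \<open>E|c\<^sub>j|\<close> over \<open>P\<^sub>*, P\<^sub>*\<^sup>\<bottom>\<close> with the sum over \<open>P\<^sub>j, P\<^sub>j\<^sup>\<bottom>\<close>.
\<close>

lemma abs_le_half_antiperiodic_path:
  fixes u :: "nat \<Rightarrow> real"
  assumes anti: "u m = - u 0" and "k \<le> m"
  shows "2 * \<bar>u k\<bar> \<le> (\<Sum>i<m. \<bar>u i - u (Suc i)\<bar>)"
proof -
  have before: "u 0 - u k = (\<Sum>i<k. u i - u (Suc i))"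
    by (rule sum_lessThan_telescope'[symmetric])
  have after: "u k - u m = (\<Sum>i=k..<m. u i - u (Suc i))"
    using sum_Suc_diff'[OF \<open>k \<le> m\<close>, of "\<lambda>i. - u i"] by simp
  have "2 * \<bar>u k\<bar> = \<bar>(u k - u m) - (u 0 - u k)\<bar>"
    using anti by simp
  also have "\<dots> \<le> \<bar>\<Sum>i=k..<m. u i - u (Suc i)\<bar> + \<bar>\<Sum>i<k. u i - u (Suc i)\<bar>"
    unfolding before after by (rule abs_triangle_ineq4)
  also have "\<dots> \<le> (\<Sum>i=k..<m. \<bar>u i - u (Suc i)\<bar>) + (\<Sum>i<k. \<bar>u i - u (Suc i)\<bar>)"
    by (intro add_mono sum_abs)
  also have "\<dots> = (\<Sum>i<m. \<bar>u i - u (Suc i)\<bar>)"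
    using \<open>k \<le> m\<close> by (simp add: lessThan_atLeast0 sum.atLeastLessThan_concat add.commute)
  finally show ?thesis .
qed

lemma sum_le_of_antiperiodic_path:
  fixes N u :: "nat \<Rightarrow> real"
  assumes anti: "u m = - u 0" and N: "\<And>i. i < m \<Longrightarrow> N i \<le> 1 - \<bar>u i - u (Suc i)\<bar> / 2"
  shows "real m * (\<Sum>i<m. N i) \<le> real m * real m - (\<Sum>k<m. \<bar>u k\<bar>)"
proof -
  have "(\<Sum>i<m. N i) \<le> real m - \<bar>u k\<bar>" if "k < m" for k
  proof -
    have "(\<Sum>i<m. N i) \<le> (\<Sum>i<m. 1 - \<bar>u i - u (Suc i)\<bar> / 2)"
      using N by (intro sum_mono) auto
    also have "\<dots> = real m - (\<Sum>i<m. \<bar>u i - u (Suc i)\<bar>) / 2"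
      by (simp add: sum_subtractf sum_divide_distrib)
    finally show ?thesis
      using abs_le_half_antiperiodic_path[OF anti, of k] that by simp
  qed
  then have "(\<Sum>k<m. \<Sum>i<m. N i) \<le> (\<Sum>k<m. real m - \<bar>u k\<bar>)"
    by (intro sum_mono) auto
  then show ?thesis
    by (simp add: sum_subtractf)
qed

lemma joint_bits_bounds:
  fixes q00 q01 q10 q11 x y :: real
  assumes "q00 + q01 = x" "q00 + q10 = y" "q00 + q01 + q10 + q11 = 1"
    and "q00 \<ge> 0" "q01 \<ge> 0" "q10 \<ge> 0" "q11 \<ge> 0"
  shows "q01 + q10 \<le> 1 - \<bar>(2 * x - 1) + (2 * y - 1)\<bar> / 2"
    and "q00 + q11 \<le> 1 - \<bar>(2 * x - 1) - (2 * y - 1)\<bar> / 2"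
  using assms by (auto simp: abs_if field_simps)

lemma odd_cycle_sum_bound:
  fixes N c :: "nat \<Rightarrow> real"
  assumes "odd n" and N: "\<And>i. i \<in> {1..n} \<Longrightarrow> N i \<le> 1 - \<bar>c i + c (nxt n i)\<bar> / 2"
  shows "real n * (\<Sum>i=1..n. N i) \<le> real n * real n - (\<Sum>j=1..n. \<bar>c j\<bar>)"
proof -
  \<comment> \<open>Alternating signs make the odd cycle a path from \<open>c 1\<close> to \<open>- c 1\<close>.\<close>
  define u where "u i = (-1) ^ i * c (nxt n i)" for i
  have "u n = - u 0"
    using \<open>odd n\<close> by (simp add: u_def nxt_def)
  moreover have "N (Suc i) \<le> 1 - \<bar>u i - u (Suc i)\<bar> / 2" if "i < n" for i
  proof -
    have "u i - u (Suc i) = (-1) ^ i * (c (Suc i) + c (nxt n (Suc i)))"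
      using that by (simp add: u_def nxt_def algebra_simps)
    then have "\<bar>u i - u (Suc i)\<bar> = \<bar>c (Suc i) + c (nxt n (Suc i))\<bar>"
      by (simp add: abs_mult)
    then show ?thesis
      using N[of "Suc i"] that by simp
  qed
  ultimately have "real n * (\<Sum>i<n. N (Suc i)) \<le> real n * real n - (\<Sum>k<n. \<bar>u k\<bar>)"
    by (rule sum_le_of_antiperiodic_path)
  moreover have "(\<Sum>k<n. \<bar>u k\<bar>) = (\<Sum>k<n. \<bar>c (Suc k)\<bar>)"
    by (intro sum.cong) (auto simp: u_def nxt_def abs_mult)
  ultimately show ?thesis
    by (simp add: sum.atLeast1_atMost_eq)
qed

lemma chain_sum_bound:
  fixes N c :: "nat \<Rightarrow> real"
  assumes "n \<ge> 1"
    and N: "\<And>i. i \<in> {1..n-1} \<Longrightarrow> N i \<le> 1 - \<bar>c i - c (Suc i)\<bar> / 2"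
    and L: "L \<le> 1 - \<bar>c n + c 1\<bar> / 2"
  shows "real n * ((\<Sum>i=1..n-1. N i) + L) \<le> real n * real n - (\<Sum>j=1..n. \<bar>c j\<bar>)"
proof -
  obtain m where n: "n = Suc m"
    using \<open>n \<ge> 1\<close> by (cases n) auto
  \<comment> \<open>The last edge flips the sign, so the chain is a path from \<open>c 1\<close> to \<open>- c 1\<close>.\<close>
  define u where "u i = (if i < n then c (Suc i) else - c 1)" for i
  define N' where "N' i = (if i < m then N (Suc i) else L)" for i
  have "u n = - u 0"
    using n by (simp add: u_def)
  moreover have "N' i \<le> 1 - \<bar>u i - u (Suc i)\<bar> / 2" if "i < n" for i
    using that N[of "Suc i"] L by (auto simp: N'_def u_def n not_less_less_Suc_eq)
  ultimately have "real n * (\<Sum>i<n. N' i) \<le> real n * real n - (\<Sum>k<n. \<bar>u k\<bar>)"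
    by (rule sum_le_of_antiperiodic_path)
  moreover have "(\<Sum>i<n. N' i) = (\<Sum>i=1..n-1. N i) + L"
    by (simp add: n N'_def sum.atLeast1_atMost_eq)
  moreover have "(\<Sum>k<n. \<bar>u k\<bar>) = (\<Sum>k<n. \<bar>c (Suc k)\<bar>)"
    by (intro sum.cong) (auto simp: u_def)
  ultimately show ?thesis
    by (simp add: sum.atLeast1_atMost_eq)
qed

lemma integrable_measure_pmf_bounded:
  fixes g :: "'a \<Rightarrow> real"
  assumes "\<And>x. \<bar>g x\<bar> \<le> B"
  shows "integrable (measure_pmf p) g"
  using assms by (intro measure_pmf.integrable_const_bound[where B = B]) auto

lemma expectation_pmf_convex_combination:
  fixes g :: "'a \<Rightarrow> real"
  assumes r: "\<And>x. pmf r x = w * pmf p x + (1 - w) * pmf q x" and g: "\<And>x. \<bar>g x\<bar> \<le> B"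
  shows "measure_pmf.expectation r g
           = w * measure_pmf.expectation p g + (1 - w) * measure_pmf.expectation q g"
proof -
  have density: "measure_pmf.expectation s g = (\<integral>x. pmf s x * g x \<partial>count_space UNIV)" for s
    by (simp add: measure_pmf_eq_density integral_density)
  have "integrable (count_space UNIV) (\<lambda>x. pmf s x * g x)" for s
    using integrable_measure_pmf_bounded[OF g, of s]
    by (simp add: measure_pmf_eq_density integrable_density)
  moreover have "(\<lambda>x. pmf r x * g x) = (\<lambda>x. w * (pmf p x * g x) + (1 - w) * (pmf q x * g x))"
    by (simp add: r algebra_simps)
  ultimately show ?thesis
    by (simp add: density)
qed

lemma nxt_mem: "i \<in> {1..n} \<Longrightarrow> nxt n i \<in> {1..n}"
  by (simp add: nxt_def Suc_leI)

lemma prv_nxt: "i \<in> {1..n} \<Longrightarrow> prv n (nxt n i) = i"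
  by (cases "i = n") (auto simp: nxt_def prv_def mod_if)

lemma two_bit_codes: "{enc a b | a b. a \<in> {0, 1} \<and> b \<in> {0, 1}} = {0, 1, 2, 3}"
proof -
  have "{enc a b | a b. a \<in> {0, 1} \<and> b \<in> {0, 1}} = {enc 0 0, enc 0 1, enc 1 0, enc 1 1}"
    by blast
  then show ?thesis
    by (simp add: enc_def)
qed

locale ontological_model =
  fixes outs :: "'m \<Rightarrow> nat set" and prob :: "'m \<Rightarrow> nat \<Rightarrow> 'p \<Rightarrow> real"
    and mix :: "real \<Rightarrow> 'p \<Rightarrow> 'p \<Rightarrow> 'p" and coarse :: "(nat \<Rightarrow> nat) \<Rightarrow> 'm \<Rightarrow> 'm"
    and \<mu> :: "'p \<Rightarrow> 'l pmf" and \<xi> :: "'m \<Rightarrow> nat \<Rightarrow> 'l \<Rightarrow> real"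
  assumes model: "ont_model outs prob mix coarse \<mu> \<xi>"
begin

lemma response_nonneg: "0 \<le> \<xi> M x l"
  and response_outside: "x \<notin> outs M \<Longrightarrow> \<xi> M x l = 0"
  and response_sum: "(\<Sum>x\<in>outs M. \<xi> M x l) = 1"
  and prob_expectation: "prob M x P = measure_pmf.expectation (\<mu> P) (\<xi> M x)"
  and pmf_mix: "0 \<le> w \<Longrightarrow> w \<le> 1 \<Longrightarrow>
      pmf (\<mu> (mix w P Q)) l = w * pmf (\<mu> P) l + (1 - w) * pmf (\<mu> Q) l"
  and response_coarse: "\<xi> (coarse f M) x l = (\<Sum>y\<in>{y\<in>outs M. f y = x}. \<xi> M y l)"
  using model unfolding ont_model_def by blast+

text \<open>The normalisation of the response functions forces finiteness, since an infinite sum is 0.\<close>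
lemma finite_outs: "finite (outs M)"
  using response_sum[of M undefined] by (metis sum.infinite zero_neq_one)

lemma response_le_one: "\<xi> M x l \<le> 1"
proof (cases "x \<in> outs M")
  case True
  then have "\<xi> M x l \<le> (\<Sum>y\<in>outs M. \<xi> M y l)"
    by (intro member_le_sum response_nonneg finite_outs)
  then show ?thesis
    by (simp add: response_sum)
qed (simp add: response_outside)

lemma integrable_response: "integrable (measure_pmf (\<mu> P)) (\<xi> M x)"
  by (rule integrable_measure_pmf_bounded[where B = 1])
    (simp add: abs_le_iff response_le_one order_trans[OF _ response_nonneg])

definition bias :: "'m \<Rightarrow> 'l \<Rightarrow> real" where
  "bias M l = 2 * \<xi> M 0 l - 1"

definition mean_abs_bias :: "'p \<Rightarrow> 'm \<Rightarrow> real" where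
  "mean_abs_bias P M = measure_pmf.expectation (\<mu> P) (\<lambda>l. \<bar>bias M l\<bar>)"

lemma abs_bias_le_one: "\<bar>bias M l\<bar> \<le> 1"
  using response_nonneg[of M 0 l] response_le_one[of M 0 l] by (simp add: bias_def abs_le_iff)

lemma integrable_abs_bias: "integrable (measure_pmf (\<mu> P)) (\<lambda>l. \<bar>bias M l\<bar>)"
  by (rule integrable_measure_pmf_bounded[where B = 1]) (simp add: abs_bias_le_one)

lemma mean_abs_bias_le_one: "mean_abs_bias P M \<le> 1"
proof -
  have "mean_abs_bias P M \<le> measure_pmf.expectation (\<mu> P) (\<lambda>l. 1)"
    unfolding mean_abs_bias_def
    by (intro integral_mono integrable_abs_bias abs_bias_le_one) simp
  then show ?thesis
    by simp
qed

lemma eta_le_mean_abs_bias: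
  assumes "outs M = {0, 1}"
  shows "eta prob M P \<le> mean_abs_bias P M"
proof -
  have "\<xi> M 1 = (\<lambda>l. 1 - \<xi> M 0 l)"
  proof
    fix l
    show "\<xi> M 1 l = 1 - \<xi> M 0 l"
      using response_sum[of M l] assms by simp
  qed
  then have "prob M 1 P = 1 - prob M 0 P"
    by (simp add: prob_expectation integrable_response)
  then have "eta prob M P = \<bar>2 * prob M 0 P - 1\<bar>"
    by (simp add: eta_def max_def abs_if)
  also have "\<dots> = \<bar>measure_pmf.expectation (\<mu> P) (\<lambda>l. bias M l)\<bar>"
    by (simp add: bias_def prob_expectation integrable_response)
  also have "\<dots> \<le> mean_abs_bias P M"
    unfolding mean_abs_bias_def by (rule integral_abs_bound)
  finally show ?thesis .
qed

lemma mean_abs_bias_mix: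
  assumes "0 \<le> w" "w \<le> 1"
  shows "mean_abs_bias (mix w P Q) M = w * mean_abs_bias P M + (1 - w) * mean_abs_bias Q M"
  unfolding mean_abs_bias_def
  using pmf_mix[OF assms] abs_bias_le_one
  by (intro expectation_pmf_convex_combination[where B = 1]) auto

lemma joint_response_marginals:
  assumes mnc: "meas_nc prob \<xi>" and J: "joint_meas outs prob coarse Mb J n" and i: "i \<in> {1..n}"
  shows "\<xi> (J i) (enc 0 0) l + \<xi> (J i) (enc 0 1) l = \<xi> (Mb i) 0 l"
    and "\<xi> (J i) (enc 0 0) l + \<xi> (J i) (enc 1 0) l = \<xi> (Mb (nxt n i)) 0 l"
    and "\<xi> (J i) (enc 0 0) l + \<xi> (J i) (enc 0 1) l + \<xi> (J i) (enc 1 0) l + \<xi> (J i) (enc 1 1) l = 1"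
proof -
  have outs_J: "outs (J i) = {0, 1, 2, 3}"
    using J i two_bit_codes by (simp add: joint_meas_def)
  have "meas_event_equiv prob (coarse (\<lambda>x. x div 2) (J i)) 0 (Mb i) 0"
    using J i by (simp add: joint_meas_def meas_equiv_def)
  then have "\<xi> (coarse (\<lambda>x. x div 2) (J i)) 0 l = \<xi> (Mb i) 0 l"
    using mnc by (simp add: meas_nc_def)
  moreover have "{y \<in> {0, 1, 2, 3 :: nat}. y div 2 = 0} = {0, 1}"
    by auto
  ultimately show "\<xi> (J i) (enc 0 0) l + \<xi> (J i) (enc 0 1) l = \<xi> (Mb i) 0 l"
    by (simp add: response_coarse outs_J enc_def)
  have "meas_event_equiv prob (coarse (\<lambda>x. x mod 2) (J (prv n (nxt n i)))) 0 (Mb (nxt n i)) 0"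
    using J nxt_mem[OF i] by (simp add: joint_meas_def meas_equiv_def)
  then have "\<xi> (coarse (\<lambda>x. x mod 2) (J i)) 0 l = \<xi> (Mb (nxt n i)) 0 l"
    using mnc by (simp add: meas_nc_def prv_nxt[OF i])
  moreover have "{y \<in> {0, 1, 2, 3 :: nat}. y mod 2 = 0} = {0, 2}"
    by auto
  ultimately show "\<xi> (J i) (enc 0 0) l + \<xi> (J i) (enc 1 0) l = \<xi> (Mb (nxt n i)) 0 l"
    by (simp add: response_coarse outs_J enc_def)
  show "\<xi> (J i) (enc 0 0) l + \<xi> (J i) (enc 0 1) l + \<xi> (J i) (enc 1 0) l + \<xi> (J i) (enc 1 1) l = 1"
    using response_sum[of "J i" l] by (simp add: outs_J enc_def add.assoc)
qed

lemma joint_response_bounds: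
  assumes "meas_nc prob \<xi>" "joint_meas outs prob coarse Mb J n" "i \<in> {1..n}"
  shows "\<xi> (J i) (enc 0 1) l + \<xi> (J i) (enc 1 0) l
           \<le> 1 - \<bar>bias (Mb i) l + bias (Mb (nxt n i)) l\<bar> / 2"
    and "\<xi> (J i) (enc 0 0) l + \<xi> (J i) (enc 1 1) l
           \<le> 1 - \<bar>bias (Mb i) l - bias (Mb (nxt n i)) l\<bar> / 2"
  using joint_bits_bounds[OF joint_response_marginals[OF assms] response_nonneg response_nonneg
      response_nonneg response_nonneg]
  by (simp_all add: bias_def)

lemma expectation_le_by_biases:
  assumes "integrable (measure_pmf (\<mu> P)) F"
    and "\<And>l. real n * F l \<le> real n * real n - (\<Sum>j=1..n. \<bar>bias (B j) l\<bar>)"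
  shows "real n * measure_pmf.expectation (\<mu> P) F
           \<le> real n * real n - (\<Sum>j=1..n. mean_abs_bias P (B j))"
proof -
  have "measure_pmf.expectation (\<mu> P) (\<lambda>l. real n * F l)
          \<le> measure_pmf.expectation (\<mu> P) (\<lambda>l. real n * real n - (\<Sum>j=1..n. \<bar>bias (B j) l\<bar>))"
    using assms integrable_abs_bias by (intro integral_mono) auto
  then show ?thesis
    using integrable_abs_bias
    by (simp add: mean_abs_bias_def Bochner_Integration.integral_sum)
qed

lemma sum_p_neq_bound:
  assumes "meas_nc prob \<xi>" "joint_meas outs prob coarse Mb J n" "odd n"
  shows "real n * (\<Sum>i=1..n. p_neq prob (J i) P)
           \<le> real n * real n - (\<Sum>j=1..n. mean_abs_bias P (Mb j))"
proof -
  define F where "F = (\<lambda>l. \<Sum>i=1..n. \<xi> (J i) (enc 0 1) l + \<xi> (J i) (enc 1 0) l)"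
  have "(\<Sum>i=1..n. p_neq prob (J i) P) = measure_pmf.expectation (\<mu> P) F"
    by (simp add: F_def p_neq_def prob_expectation integrable_response
        Bochner_Integration.integral_sum)
  moreover have "integrable (measure_pmf (\<mu> P)) F"
    unfolding F_def
    by (intro Bochner_Integration.integrable_sum Bochner_Integration.integrable_add
        integrable_response)
  moreover have "real n * F l \<le> real n * real n - (\<Sum>j=1..n. \<bar>bias (Mb j) l\<bar>)" for l
    unfolding F_def using joint_response_bounds(1)[OF assms(1,2)]
    by (intro odd_cycle_sum_bound[OF \<open>odd n\<close>, where c = "\<lambda>j. bias (Mb j) l"]) simp
  ultimately show ?thesis
    using expectation_le_by_biases by simp
qed

lemma sum_p_chained_bound:
  assumes "meas_nc prob \<xi>" "joint_meas outs prob coarse Mb J n" "n \<ge> 1"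
  shows "real n * ((\<Sum>i=1..n-1. p_eq prob (J i) P) + p_neq prob (J n) P)
           \<le> real n * real n - (\<Sum>j=1..n. mean_abs_bias P (Mb j))"
proof -
  define F where "F = (\<lambda>l. (\<Sum>i=1..n-1. \<xi> (J i) (enc 0 0) l + \<xi> (J i) (enc 1 1) l)
                             + (\<xi> (J n) (enc 0 1) l + \<xi> (J n) (enc 1 0) l))"
  have "(\<Sum>i=1..n-1. p_eq prob (J i) P) + p_neq prob (J n) P = measure_pmf.expectation (\<mu> P) F"
    by (simp add: F_def p_eq_def p_neq_def prob_expectation integrable_response
        Bochner_Integration.integral_sum)
  moreover have "integrable (measure_pmf (\<mu> P)) F"
    unfolding F_def
    by (intro Bochner_Integration.integrable_sum Bochner_Integration.integrable_add
        integrable_response)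
  moreover have "real n * F l \<le> real n * real n - (\<Sum>j=1..n. \<bar>bias (Mb j) l\<bar>)" for l
  proof -
    have "nxt n i = Suc i" if "i \<in> {1..n-1}" for i
      using that by (auto simp: nxt_def)
    then have "\<xi> (J i) (enc 0 0) l + \<xi> (J i) (enc 1 1) l
                 \<le> 1 - \<bar>bias (Mb i) l - bias (Mb (Suc i)) l\<bar> / 2" if "i \<in> {1..n-1}" for i
      using joint_response_bounds(2)[OF assms(1,2), of i l] that by auto
    moreover have "\<xi> (J n) (enc 0 1) l + \<xi> (J n) (enc 1 0) l
                     \<le> 1 - \<bar>bias (Mb n) l + bias (Mb 1) l\<bar> / 2"
      using joint_response_bounds(1)[OF assms(1,2), of n l] \<open>n \<ge> 1\<close> by (simp add: nxt_def)
    ultimately show ?thesis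
      unfolding F_def
      by (intro chain_sum_bound[OF \<open>n \<ge> 1\<close>, where c = "\<lambda>j. bias (Mb j) l"]) simp_all
  qed
  ultimately show ?thesis
    using expectation_le_by_biases by simp
qed

lemma eta_ave_le_mean_abs_bias:
  assumes pnc: "prep_nc prob \<mu>"
    and prep: "\<forall>i\<in>{1..n}. prep_equiv prob (mix (1/2) Ps Psp) (mix (1/2) (Px i) (Pxp i))"
    and binary: "\<forall>i\<in>{1..n}. outs (Mb i) = {0, 1}"
  shows "2 * real n * eta_ave prob Mb Px Pxp n
           \<le> (\<Sum>j=1..n. mean_abs_bias Ps (Mb j)) + (\<Sum>j=1..n. mean_abs_bias Psp (Mb j))"
proof -
  have same_mix: "mean_abs_bias Ps (Mb i) + mean_abs_bias Psp (Mb i)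
                    = mean_abs_bias (Px i) (Mb i) + mean_abs_bias (Pxp i) (Mb i)" if "i \<in> {1..n}" for i
  proof -
    have "\<mu> (mix (1/2) Ps Psp) = \<mu> (mix (1/2) (Px i) (Pxp i))"
      using pnc prep that by (simp add: prep_nc_def)
    then have "mean_abs_bias (mix (1/2) Ps Psp) (Mb i) = mean_abs_bias (mix (1/2) (Px i) (Pxp i)) (Mb i)"
      by (simp add: mean_abs_bias_def)
    then show ?thesis
      using mean_abs_bias_mix[of "1/2"] by simp
  qed
  have "2 * real n * eta_ave prob Mb Px Pxp n
          = (\<Sum>i=1..n. eta prob (Mb i) (Px i) + eta prob (Mb i) (Pxp i))"
    by (cases "n = 0") (simp_all add: eta_ave_def)
  also have "\<dots> \<le> (\<Sum>i=1..n. mean_abs_bias (Px i) (Mb i) + mean_abs_bias (Pxp i) (Mb i))"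
    using binary by (intro sum_mono add_mono eta_le_mean_abs_bias) auto
  also have "\<dots> = (\<Sum>i=1..n. mean_abs_bias Ps (Mb i) + mean_abs_bias Psp (Mb i))"
    using same_mix by simp
  finally show ?thesis
    by (simp add: sum.distrib)
qed

end

lemma average_pair_bound:
  fixes n A B S S' e :: real
  assumes "n > 0" "n * A \<le> n * n - S" "n * B \<le> n * n - S'" "2 * n * e \<le> S + S'"
  shows "(1 / n) * A + (1 / n) * B \<le> 2 * (1 - e / n)"
proof -
  have "n * (A + B) \<le> n * (2 * n - 2 * e)"
    using assms(2-4) by (simp add: algebra_simps)
  then have "(1 / n) * (A + B) \<le> (1 / n) * (2 * n - 2 * e)"
    using \<open>n > 0\<close> by (intro mult_left_mono) simp_all
  then show ?thesis
    using \<open>n > 0\<close> by (simp add: add_divide_distrib diff_divide_distrib algebra_simps)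
qed

lemma average_single_bound:
  fixes n A S S' e :: real
  assumes "n > 0" "n * A \<le> n * n - S" "2 * n * e \<le> S + S'" "S' \<le> n"
  shows "(1 / n) * A \<le> (n - 1) / n + 2 * (1 - e) / n"
proof -
  have "n * A \<le> n * (n + 1 - 2 * e)"
    using assms(2-4) by (simp add: algebra_simps)
  then have "(1 / n) * A \<le> (1 / n) * (n + 1 - 2 * e)"
    using \<open>n > 0\<close> by (intro mult_left_mono) simp_all
  then show ?thesis
    using \<open>n > 0\<close> by (simp add: add_divide_distrib diff_divide_distrib algebra_simps)
qed

theorem mainTheorem10:
  fixes outs :: "'m \<Rightarrow> nat set" and prob :: "'m \<Rightarrow> nat \<Rightarrow> 'p \<Rightarrow> real"
    and mix :: "real \<Rightarrow> 'p \<Rightarrow> 'p \<Rightarrow> 'p" and coarse :: "(nat \<Rightarrow> nat) \<Rightarrow> 'm \<Rightarrow> 'm"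
    and Mb Mj Mj' :: "nat \<Rightarrow> 'm"
    and Ps Psp :: 'p and Px Pxp :: "nat \<Rightarrow> 'p"
    and n :: nat
    and \<mu> :: "'p \<Rightarrow> 'l pmf" and \<xi> :: "'m \<Rightarrow> nat \<Rightarrow> 'l \<Rightarrow> real"
  assumes opth: "op_theory outs prob mix coarse"
    and n3: "n \<ge> 3"
    and binary: "\<forall>i\<in>{1..n}. outs (Mb i) = {0, 1}"
    and jointM: "joint_meas outs prob coarse Mb Mj n"
    and prep: "\<forall>i\<in>{1..n}. prep_equiv prob (mix (1/2) Ps Psp) (mix (1/2) (Px i) (Pxp i))"
    and model: "ont_model outs prob mix coarse \<mu> \<xi>"
    and mnc: "meas_nc prob \<xi>"
    and pnc: "prep_nc prob \<mu>"
  shows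
    "(joint_meas outs prob coarse Mb Mj' n \<longrightarrow>
        (odd n \<longrightarrow> p_anti prob Mj n Ps + p_anti prob Mj' n Psp
                     \<le> 2 * (1 - eta_ave prob Mb Px Pxp n / real n)) \<and>
        (even n \<longrightarrow> p_chained prob Mj n Ps + p_chained prob Mj' n Psp
                     \<le> 2 * (1 - eta_ave prob Mb Px Pxp n / real n))) \<and>
     (odd n \<longrightarrow>
        p_anti prob Mj n Ps + p_anti prob Mj n Psp \<le> 2 * (1 - eta_ave prob Mb Px Pxp n / real n) \<and>
        p_anti prob Mj n Ps \<le> (real n - 1) / real n + 2 * (1 - eta_ave prob Mb Px Pxp n) / real n) \<and>
     (even n \<longrightarrow>
        p_chained prob Mj n Ps + p_chained prob Mj n Psp \<le> 2 * (1 - eta_ave prob Mb Px Pxp n / real n) \<and>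
        p_chained prob Mj n Ps \<le> (real n - 1) / real n + 2 * (1 - eta_ave prob Mb Px Pxp n) / real n)"
proof -
  interpret ontological_model outs prob mix coarse \<mu> \<xi>
    by (rule ontological_model.intro[OF model])
  have n: "real n > 0" "n \<ge> 1"
    using n3 by simp_all
  note eta = eta_ave_le_mean_abs_bias[OF pnc prep binary]
  have bias_Psp: "(\<Sum>j=1..n. mean_abs_bias Psp (Mb j)) \<le> real n"
    using sum_mono[of "{1..n}" "\<lambda>j. mean_abs_bias Psp (Mb j)" "\<lambda>_. 1"] mean_abs_bias_le_one by simp
  note anti = sum_p_neq_bound[OF mnc]
  note chained = sum_p_chained_bound[OF mnc _ n(2)]
  have chained_eq: "p_chained prob J n P
                      = (1 / real n) * ((\<Sum>i=1..n-1. p_eq prob (J i) P) + p_neq prob (J n) P)" for J P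
    by (simp add: p_chained_def distrib_left)
  show ?thesis
    unfolding p_anti_def chained_eq
    using average_pair_bound[OF n(1) _ _ eta] average_single_bound[OF n(1) _ eta bias_Psp]
      anti chained jointM
    by blast
qed

end
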